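(* If the differentiable function $F:\Omega\subset\mathbb{C}^{2p}\to\mathbb S$ is q-monogenic, then so are the functions $PF$ and $QF$.
   Context: Identify $\mathbb{C}^{2p}\simeq\mathbb{R}^{4p}$ with coordinates $(x_1,y_1,\dots,x_{2p},y_{2p})$, $z_k=x_k+iy_k$, $\partial_{z_k}=\tfrac12(\partial_{x_k}-i\partial_{y_k})$, $\partial_{\bar z_k}=\tfrac12(\partial_{x_k}+i\partial_{y_k})$; $\Omega$ open. $\mathbb{C}_{4p}$ is the complex Clifford algebra generated by $e_1,\dots,e_{4p}$ with $e_\alpha e_\beta+e_\beta e_\alpha=-2\delta_{\alpha\beta}$. Witt basis: $\mathfrak f_k=\tfrac12(-e_{2k-1}+ie_{2k})$, $\mathfrak f_k^\dagger=\tfrac12(e_{2k-1}+ie_{2k})$. $I=\prod_k\mathfrak f_k\mathfrak f_k^\dagger$, $\mathbb S=\mathbb C_{4p}I$. $P=\sum_{j=1}^p\mathfrak f_{2j}\mathfrak f_{2j-1}$, $Q=\sum_{j=1}^p\mathfrak f^\dagger_{2j-1}\mathfrak f^\dagger_{2j}$, acting by left multiplication. A function $G$ with values in $\mathbb S$ is q-monogenic if it is annihilated by $\partial_{\underline z}=\sum_{k}\mathfrak f_k^\dagger\partial_{z_k}$, $\partial_{\underline z}^\dagger=\sum_{k}\mathfrak f_k\partial_{\bar z_k}$, $\partial_{\underline z}^J=\sum_{j=1}^p(\mathfrak f_{2j-1}\partial_{z_{2j}}-\mathfrak f_{2j}\partial_{z_{2j-1}})$ and $\partial_{\underline z}^{\dagger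 J}=\sum_{j=1}^p(\mathfrak f^\dagger_{2j-1}\partial_{\bar z_{2j}}-\mathfrak f^\dagger_{2j}\partial_{\bar z_{2j-1}})$ (equivalently, by $\underline\partial=\sum_\alpha e_\alpha\partial_{X_\alpha}$ and its rotations by the complex structures $\mathbb I,\mathbb J,\mathbb K=\mathbb I\mathbb J$, where $\mathbb{I}(e_{2k-1})=e_{2k}$, $\mathbb{I}(e_{2k})=-e_{2k-1}$, $\mathbb{J}(e_{4j-3})=e_{4j-1}$, $\mathbb{J}(e_{4j-2})=-e_{4j}$, $\mathbb{J}(e_{4j-1})=-e_{4j-3}$, $\mathbb{J}(e_{4j})=e_{4j-2}$). *)

theory Defs
  imports "HOL-Analysis.Analysis"
begin

text \<open>Complex Clifford algebra: an element is a coefficient function on blades,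
  a blade being a finite set of generator indices; the algebra C_n consists of
  elements supported on subsets of {1..n}. Generators satisfy e_a e_b + e_b e_a = -2 delta_ab.\<close>

type_synonym cliff = "nat set \<Rightarrow> complex"

definition cl_zero :: cliff where "cl_zero = (\<lambda>A. 0)"
definition cl_one :: cliff where "cl_one = (\<lambda>A. if A = {} then 1 else 0)"
definition cl_gen :: "nat \<Rightarrow> cliff" where "cl_gen i = (\<lambda>A. if A = {i} then 1 else 0)"
definition cl_add :: "cliff \<Rightarrow> cliff \<Rightarrow> cliff" where "cl_add x y = (\<lambda>A. x A + y A)"
definition cl_scale :: "complex \<Rightarrow> cliff \<Rightarrow> cliff" where "cl_scale c x = (\<lambda>A. c * x A)"
definition cl_sum :: "('i \<Rightarrow> cliff) \<Rightarrow> 'i set \<Rightarrow> cliff" where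
  "cl_sum f K = (\<lambda>A. \<Sum>k\<in>K. f k A)"

definition clifford_alg :: "nat \<Rightarrow> cliff set" where
  "clifford_alg n = {x. \<forall>A. x A \<noteq> 0 \<longrightarrow> A \<subseteq> {1..n}}"

text \<open>e_A e_B = sign(A,B) e_(A symmetric-difference B), with e_i e_i = -1.\<close>
definition blade_sign :: "nat set \<Rightarrow> nat set \<Rightarrow> complex" where
  "blade_sign A B = (-1) ^ (card {(a,b). a \<in> A \<and> b \<in> B \<and> b < a} + card (A \<inter> B))"

definition cl_mult :: "nat \<Rightarrow> cliff \<Rightarrow> cliff \<Rightarrow> cliff" where
  "cl_mult n x y = (\<lambda>C. \<Sum>A\<in>Pow {1..n}. \<Sum>B\<in>Pow {1..n}.
      if (A - B) \<union> (B - A) = C then blade_sign A B * x A * y B else 0)"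

definition witt :: "nat \<Rightarrow> cliff" where
  "witt k = cl_scale (1/2) (cl_add (cl_scale (-1) (cl_gen (2*k-1))) (cl_scale \<i> (cl_gen (2*k))))"
definition witt_dag :: "nat \<Rightarrow> cliff" where
  "witt_dag k = cl_scale (1/2) (cl_add (cl_gen (2*k-1)) (cl_scale \<i> (cl_gen (2*k))))"

primrec idem_prod :: "nat \<Rightarrow> nat \<Rightarrow> cliff" where
  "idem_prod n 0 = cl_one"
| "idem_prod n (Suc m) = cl_mult n (idem_prod n m) (cl_mult n (witt (Suc m)) (witt_dag (Suc m)))"

definition prim_idem :: "nat \<Rightarrow> cliff" where
  "prim_idem p = idem_prod (4*p) (2*p)"

definition spinor_space :: "nat \<Rightarrow> cliff set" where
  "spinor_space p = {cl_mult (4*p) a (prim_idem p) | a. a \<in> clifford_alg (4*p)}"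

definition P_op :: "nat \<Rightarrow> cliff" where
  "P_op p = cl_sum (\<lambda>j. cl_mult (4*p) (witt (2*j)) (witt (2*j-1))) {1..p}"
definition Q_op :: "nat \<Rightarrow> cliff" where
  "Q_op p = cl_sum (\<lambda>j. cl_mult (4*p) (witt_dag (2*j-1)) (witt_dag (2*j))) {1..p}"

text \<open>Points of C^{2p}: complex^'n, where idx enumerates the coordinates as z_1..z_{2p}.
  Partial derivatives along x_k and y_k (real and imaginary parts of z_k), componentwise.\<close>
definition pdx :: "(nat \<Rightarrow> 'n::finite) \<Rightarrow> nat \<Rightarrow> (complex^'n \<Rightarrow> cliff) \<Rightarrow> complex^'n \<Rightarrow> cliff" where
  "pdx idx k G z = (\<lambda>A. vector_derivative (\<lambda>t::real. G (z + t *\<^sub>R axis (idx k) 1) A) (at 0))"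
definition pdy :: "(nat \<Rightarrow> 'n::finite) \<Rightarrow> nat \<Rightarrow> (complex^'n \<Rightarrow> cliff) \<Rightarrow> complex^'n \<Rightarrow> cliff" where
  "pdy idx k G z = (\<lambda>A. vector_derivative (\<lambda>t::real. G (z + t *\<^sub>R axis (idx k) \<i>) A) (at 0))"
definition pdz :: "(nat \<Rightarrow> 'n::finite) \<Rightarrow> nat \<Rightarrow> (complex^'n \<Rightarrow> cliff) \<Rightarrow> complex^'n \<Rightarrow> cliff" where
  "pdz idx k G z = cl_scale (1/2) (cl_add (pdx idx k G z) (cl_scale (-\<i>) (pdy idx k G z)))"
definition pdzb :: "(nat \<Rightarrow> 'n::finite) \<Rightarrow> nat \<Rightarrow> (complex^'n \<Rightarrow> cliff) \<Rightarrow> complex^'n \<Rightarrow> cliff" where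
  "pdzb idx k G z = cl_scale (1/2) (cl_add (pdx idx k G z) (cl_scale \<i> (pdy idx k G z)))"

definition dirac_z :: "nat \<Rightarrow> (nat \<Rightarrow> 'n::finite) \<Rightarrow> (complex^'n \<Rightarrow> cliff) \<Rightarrow> complex^'n \<Rightarrow> cliff" where
  "dirac_z p idx G z = cl_sum (\<lambda>k. cl_mult (4*p) (witt_dag k) (pdz idx k G z)) {1..2*p}"
definition dirac_z_dag :: "nat \<Rightarrow> (nat \<Rightarrow> 'n::finite) \<Rightarrow> (complex^'n \<Rightarrow> cliff) \<Rightarrow> complex^'n \<Rightarrow> cliff" where
  "dirac_z_dag p idx G z = cl_sum (\<lambda>k. cl_mult (4*p) (witt k) (pdzb idx k G z)) {1..2*p}"
definition dirac_zJ :: "nat \<Rightarrow> (nat \<Rightarrow> 'n::finite) \<Rightarrow> (complex^'n \<Rightarrow> cliff) \<Rightarrow> complex^'n \<Rightarrow> cliff" where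
  "dirac_zJ p idx G z = cl_sum (\<lambda>j. cl_add (cl_mult (4*p) (witt (2*j-1)) (pdz idx (2*j) G z))
       (cl_scale (-1) (cl_mult (4*p) (witt (2*j)) (pdz idx (2*j-1) G z)))) {1..p}"
definition dirac_zJ_dag :: "nat \<Rightarrow> (nat \<Rightarrow> 'n::finite) \<Rightarrow> (complex^'n \<Rightarrow> cliff) \<Rightarrow> complex^'n \<Rightarrow> cliff" where
  "dirac_zJ_dag p idx G z = cl_sum (\<lambda>j. cl_add (cl_mult (4*p) (witt_dag (2*j-1)) (pdzb idx (2*j) G z))
       (cl_scale (-1) (cl_mult (4*p) (witt_dag (2*j)) (pdzb idx (2*j-1) G z)))) {1..p}"

definition cl_differentiable_on :: "(complex^'n::finite) set \<Rightarrow> (complex^'n \<Rightarrow> cliff) \<Rightarrow> bool" where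
  "cl_differentiable_on \<Omega> G = (\<forall>z\<in>\<Omega>. \<forall>A. (\<lambda>w. G w A) differentiable (at z))"

definition q_monogenic :: "nat \<Rightarrow> (nat \<Rightarrow> 'n::finite) \<Rightarrow> (complex^'n) set \<Rightarrow> (complex^'n \<Rightarrow> cliff) \<Rightarrow> bool" where
  "q_monogenic p idx \<Omega> G \<longleftrightarrow>
     (\<forall>z\<in>\<Omega>. G z \<in> spinor_space p) \<and> cl_differentiable_on \<Omega> G \<and>
     (\<forall>z\<in>\<Omega>. dirac_z p idx G z = cl_zero \<and> dirac_z_dag p idx G z = cl_zero \<and>
              dirac_zJ p idx G z = cl_zero \<and> dirac_zJ_dag p idx G z = cl_zero)"

end

theory Submission
  imports Defs
begin

text \<open>\<open>P\<close> and \<open>Q\<close> are sums of products of two Witt vectors, so the anticommutation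
  relations of the Witt basis give \<open>f\<^sub>k P = P f\<^sub>k\<close>, \<open>f\<^sub>k\<^sup>\<dagger> P = P f\<^sub>k\<^sup>\<dagger> + (\<JJ>f)\<^sub>k\<close>,
  \<open>f\<^sub>k\<^sup>\<dagger> Q = Q f\<^sub>k\<^sup>\<dagger>\<close> and \<open>f\<^sub>k Q = Q f\<^sub>k - (\<JJ>f\<^sup>\<dagger>)\<^sub>k\<close>, where \<open>\<JJ>\<close> is the complex
  structure pairing \<open>z\<^sub>2\<^sub>j\<^sub>-\<^sub>1\<close> with \<open>z\<^sub>2\<^sub>j\<close>. Left multiplication by a constant commutes with
  differentiation, so each of the four operators applied to \<open>PF\<close> is \<open>P\<close> times the same
  operator applied to \<open>F\<close> plus a commutator term, and that term is a multiple of another of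
  the four operators applied to \<open>F\<close>; e.g. \<open>\<partial>\<^sub>z(PF) = P \<partial>\<^sub>z F + \<partial>\<^sub>z\<^sup>J F\<close> and
  \<open>\<partial>\<^sub>z\<^sup>\<dagger>\<^sup>J(PF) = P \<partial>\<^sub>z\<^sup>\<dagger>\<^sup>J F - \<partial>\<^sub>z\<^sup>\<dagger> F\<close>. The same holds for \<open>Q\<close>, so all of them vanish.\<close>

section \<open>Associativity of Clifford multiplication\<close>

definition symdiff :: "nat set \<Rightarrow> nat set \<Rightarrow> nat set" where
  "symdiff A B = (A - B) \<union> (B - A)"

text \<open>Product form of \<^const>\<open>blade_sign\<close>: unlike the counting form it is visibly
  multiplicative in each argument with respect to \<^const>\<open>symdiff\<close>, which is what makes
  the product associative.\<close>
definition swap_sign :: "nat set \<Rightarrow> nat set \<Rightarrow> complex" where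
  "swap_sign A B = (\<Prod>a\<in>A. \<Prod>b\<in>B. if b \<le> a then -1 else 1)"

lemma card_pairs_le_eq:
  fixes A B :: "nat set"
  assumes "finite A" "finite B"
  shows "card {(a,b). a \<in> A \<and> b \<in> B \<and> b \<le> a} =
    card {(a,b). a \<in> A \<and> b \<in> B \<and> b < a} + card (A \<inter> B)"
proof -
  have split: "{(a,b). a \<in> A \<and> b \<in> B \<and> b \<le> a} =
      {(a,b). a \<in> A \<and> b \<in> B \<and> b < a} \<union> (\<lambda>x. (x,x)) ` (A \<inter> B)"
    by force
  have "finite {(a,b). a \<in> A \<and> b \<in> B \<and> b < a}"
    by (rule finite_subset[of _ "A \<times> B"]) (use assms in auto)
  moreover have "card ((\<lambda>x. (x,x)) ` (A \<inter> B)) = card (A \<inter> B)"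
    by (rule card_image) (auto simp: inj_on_def)
  ultimately show ?thesis
    unfolding split using assms by (subst card_Un_disjoint) auto
qed

lemma blade_sign_eq_swap_sign:
  assumes "finite A" "finite B"
  shows "blade_sign A B = swap_sign A B"
proof -
  have "swap_sign A B = (\<Prod>x\<in>A \<times> B. if snd x \<le> fst x then -1 else 1)"
    unfolding swap_sign_def by (simp add: prod.cartesian_product case_prod_beta)
  also have "\<dots> = (\<Prod>x\<in>{x\<in>A \<times> B. snd x \<le> fst x}. -1)"
    using assms by (simp add: prod.If_cases Collect_conj_eq Int_commute)
  also have "{x\<in>A \<times> B. snd x \<le> fst x} = {(a,b). a \<in> A \<and> b \<in> B \<and> b \<le> a}"
    by auto
  finally show ?thesis
    unfolding blade_sign_def using card_pairs_le_eq[OF assms] by simp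
qed

lemma prod_symdiff:
  fixes g :: "nat \<Rightarrow> complex"
  assumes "finite A" "finite B" "\<And>x. g x * g x = 1"
  shows "prod g (symdiff A B) = prod g A * prod g B"
proof -
  have square: "prod g S * prod g S = 1" for S
    unfolding prod.distrib[symmetric] using assms(3) by simp
  have "prod g (symdiff A B) = prod g (A - B) * prod g (B - A)"
    unfolding symdiff_def by (rule prod.union_disjoint) (use assms in auto)
  moreover have "prod g A = prod g (A - B) * prod g (A \<inter> B)"
    using prod.Int_Diff[OF assms(1), of g B] by (simp add: mult.commute)
  moreover have "prod g B = prod g (B - A) * prod g (A \<inter> B)"
    using prod.Int_Diff[OF assms(2), of g A] by (simp add: mult.commute Int_commute)
  ultimately show ?thesis using square by (simp add: algebra_simps)
qed

lemma sign_if_square [simp]: "(if c then -1 else 1) * (if c then -1 else 1) = (1::complex)"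
  by simp

lemma swap_sign_square: "swap_sign A B * swap_sign A B = 1"
  unfolding swap_sign_def prod.distrib[symmetric] by simp

lemma swap_sign_symdiff_left:
  "finite A \<Longrightarrow> finite B \<Longrightarrow> swap_sign (symdiff A B) C = swap_sign A C * swap_sign B C"
  unfolding swap_sign_def by (rule prod_symdiff) (unfold prod.distrib[symmetric], auto)

lemma swap_sign_symdiff_right:
  "finite B \<Longrightarrow> finite C \<Longrightarrow> swap_sign A (symdiff B C) = swap_sign A B * swap_sign A C"
  unfolding swap_sign_def
  by (subst prod.distrib[symmetric]) (rule prod.cong, simp, rule prod_symdiff, auto)

lemma symdiff_eq_iff: "symdiff A B = C \<longleftrightarrow> B = symdiff A C"
  unfolding symdiff_def by auto

lemma symdiff_symdiff [simp]: "symdiff A (symdiff A B) = B"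
  unfolding symdiff_def by auto

lemma symdiff_assoc: "symdiff (symdiff A B) C = symdiff B (symdiff A C)"
  unfolding symdiff_def by auto

lemma symdiff_subset_iff: "A \<subseteq> S \<Longrightarrow> symdiff A C \<subseteq> S \<longleftrightarrow> C \<subseteq> S"
  unfolding symdiff_def by auto

lemma symdiff_empty_iff: "symdiff A C = {} \<longleftrightarrow> A = C"
  unfolding symdiff_def by auto

lemma cl_mult_apply:
  "cl_mult n x y C = (if C \<subseteq> {1..n} then
      (\<Sum>A\<in>Pow {1..n}. swap_sign A (symdiff A C) * x A * y (symdiff A C)) else 0)"
proof -
  have "cl_mult n x y C = (\<Sum>A\<in>Pow {1..n}. if symdiff A C \<in> Pow {1..n}
        then blade_sign A (symdiff A C) * x A * y (symdiff A C) else 0)"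
    unfolding cl_mult_def symdiff_def[symmetric] symdiff_eq_iff
    by (rule sum.cong, simp, subst sum.delta, auto)
  also have "\<dots> = (\<Sum>A\<in>Pow {1..n}. if C \<subseteq> {1..n} then
        swap_sign A (symdiff A C) * x A * y (symdiff A C) else 0)"
  proof (rule sum.cong[OF refl])
    fix A assume A: "A \<in> Pow {1..n}"
    then have "finite A" using finite_subset by auto
    moreover have "symdiff A C \<in> Pow {1..n} \<longleftrightarrow> C \<subseteq> {1..n}"
      using A symdiff_subset_iff by auto
    moreover have "symdiff A C \<subseteq> {1..n} \<Longrightarrow> finite (symdiff A C)"
      using finite_subset by auto
    ultimately show "(if symdiff A C \<in> Pow {1..n}
        then blade_sign A (symdiff A C) * x A * y (symdiff A C) else 0) =
      (if C \<subseteq> {1..n} then swap_sign A (symdiff A C) * x A * y (symdiff A C) else 0)"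
      by (auto simp: blade_sign_eq_swap_sign)
  qed
  finally show ?thesis by auto
qed

lemma cl_mult_outside: "\<not> C \<subseteq> {1..n} \<Longrightarrow> cl_mult n x y C = 0"
  by (simp add: cl_mult_apply)

lemma cl_mult_in_clifford_alg [simp]: "cl_mult n x y \<in> clifford_alg n"
  unfolding clifford_alg_def using cl_mult_outside by blast

lemma cl_mult_assoc: "cl_mult n (cl_mult n x y) z = cl_mult n x (cl_mult n y z)"
proof
  fix C
  let ?P = "Pow {1..n}"
  show "cl_mult n (cl_mult n x y) z C = cl_mult n x (cl_mult n y z) C"
  proof (cases "C \<subseteq> {1..n}")
    case False then show ?thesis by (simp add: cl_mult_outside)
  next
    case True
    have "cl_mult n (cl_mult n x y) z C = (\<Sum>D\<in>?P. \<Sum>A\<in>?P.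
        swap_sign D (symdiff D C) * swap_sign A (symdiff A D) *
        x A * y (symdiff A D) * z (symdiff D C))"
      using True unfolding cl_mult_apply[of n _ z]
      by (simp add: cl_mult_apply[of n x y] sum_distrib_left sum_distrib_right mult_ac)
    also have "\<dots> = (\<Sum>A\<in>?P. \<Sum>D\<in>?P.
        swap_sign D (symdiff D C) * swap_sign A (symdiff A D) *
        x A * y (symdiff A D) * z (symdiff D C))"
      by (rule sum.swap)
    also have "\<dots> = (\<Sum>A\<in>?P. \<Sum>B\<in>?P.
        swap_sign A (symdiff A C) * x A *
        (swap_sign B (symdiff B (symdiff A C)) * y B * z (symdiff B (symdiff A C))))"
    proof (rule sum.cong[OF refl])
      fix A assume A: "A \<in> ?P"
      have bij: "bij_betw (symdiff A) ?P ?P"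
        by (rule bij_betwI[where g = "symdiff A"]) (use A in \<open>auto simp: symdiff_subset_iff\<close>)
      have fin: "finite A" "finite C" "B \<in> ?P \<Longrightarrow> finite B" for B
        using A True by (auto intro: rev_finite_subset[OF finite_atLeastAtMost])
      \<comment> \<open>substitute \<open>D = symdiff A B\<close> and regroup the signs\<close>
      show "(\<Sum>D\<in>?P. swap_sign D (symdiff D C) * swap_sign A (symdiff A D) *
          x A * y (symdiff A D) * z (symdiff D C)) =
        (\<Sum>B\<in>?P. swap_sign A (symdiff A C) * x A *
          (swap_sign B (symdiff B (symdiff A C)) * y B * z (symdiff B (symdiff A C))))"
        using fin
        by (subst sum.reindex_bij_betw[OF bij, symmetric])
           (auto intro!: sum.cong simp: symdiff_assoc swap_sign_symdiff_left
              swap_sign_symdiff_right swap_sign_square mult_ac)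
    qed
    also have "\<dots> = cl_mult n x (cl_mult n y z) C"
    proof -
      have "A \<in> ?P \<Longrightarrow> symdiff A C \<subseteq> {1..n}" for A
        using True symdiff_subset_iff by auto
      then show ?thesis
        using True by (simp add: cl_mult_apply[of n x] cl_mult_apply[of n y z] sum_distrib_left)
    qed
    finally show ?thesis .
  qed
qed

section \<open>Linearity, unit and the Witt relations\<close>

lemma cl_add_apply: "cl_add x y C = x C + y C" by (simp add: cl_add_def)
lemma cl_scale_apply: "cl_scale c x C = c * x C" by (simp add: cl_scale_def)
lemma cl_sum_apply: "cl_sum f K C = (\<Sum>k\<in>K. f k C)" by (simp add: cl_sum_def)
lemma cl_zero_apply: "cl_zero C = 0" by (simp add: cl_zero_def)
lemmas cl_apply = cl_add_apply cl_scale_apply cl_sum_apply cl_zero_apply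

lemma cl_add_zero_right [simp]: "cl_add x cl_zero = x"
  by (simp add: fun_eq_iff cl_apply)

lemma cl_scale_zero [simp]: "cl_scale 0 x = cl_zero" "cl_scale c cl_zero = cl_zero"
  by (simp_all add: fun_eq_iff cl_apply)

lemma cl_sum_zero [simp]: "cl_sum (\<lambda>_. cl_zero) K = cl_zero"
  by (simp add: fun_eq_iff cl_apply)

lemma cl_scale_one [simp]: "cl_scale 1 x = x"
  by (simp add: fun_eq_iff cl_apply)

lemma cl_mult_add_left: "cl_mult n (cl_add x y) z = cl_add (cl_mult n x z) (cl_mult n y z)"
  by (rule ext) (simp add: cl_mult_apply cl_add_def sum.distrib[symmetric] algebra_simps)

lemma cl_mult_add_right: "cl_mult n z (cl_add x y) = cl_add (cl_mult n z x) (cl_mult n z y)"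
  by (rule ext) (simp add: cl_mult_apply cl_add_def sum.distrib[symmetric] algebra_simps)

lemma cl_mult_scale_left: "cl_mult n (cl_scale c x) z = cl_scale c (cl_mult n x z)"
  by (rule ext) (simp add: cl_mult_apply cl_scale_def sum_distrib_left algebra_simps)

lemma cl_mult_scale_right: "cl_mult n z (cl_scale c x) = cl_scale c (cl_mult n z x)"
  by (rule ext) (simp add: cl_mult_apply cl_scale_def sum_distrib_left algebra_simps)

lemma cl_mult_zero_right [simp]: "cl_mult n z cl_zero = cl_zero"
  by (rule ext) (simp add: cl_mult_apply cl_zero_def)

lemma cl_mult_sum_left:
  "finite K \<Longrightarrow> cl_mult n (cl_sum f K) z = cl_sum (\<lambda>k. cl_mult n (f k) z) K"
  by (rule ext) (simp add: cl_mult_apply cl_sum_def sum_distrib_left sum_distrib_right,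
      subst sum.swap, simp add: algebra_simps)

lemma cl_mult_sum_right:
  "finite K \<Longrightarrow> cl_mult n z (cl_sum f K) = cl_sum (\<lambda>k. cl_mult n z (f k)) K"
  by (rule ext) (simp add: cl_mult_apply cl_sum_def sum_distrib_left sum_distrib_right,
      subst sum.swap, simp add: algebra_simps)

lemma mult_indicator_complex [simp]:
  "(if P then 1 else 0) * (x::complex) = (if P then x else 0)"
  "x * (if P then 1 else 0) = (if P then x else 0)"
  "(if P then a else 0) * x = (if P then a * x else 0)"
  by auto

lemma symdiff_empty [simp]: "symdiff {} C = C" "symdiff C C = {}"
  unfolding symdiff_def by auto

lemma swap_sign_empty [simp]: "swap_sign {} C = 1" "swap_sign C {} = 1"
  by (simp_all add: swap_sign_def)

lemma cl_mult_one_left: "x \<in> clifford_alg n \<Longrightarrow> cl_mult n cl_one x = x"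
proof (rule ext)
  fix C assume x: "x \<in> clifford_alg n"
  show "cl_mult n cl_one x C = x C"
  proof (cases "C \<subseteq> {1..n}")
    case True
    have "cl_mult n cl_one x C = (\<Sum>A\<in>Pow {1..n}. if A = {} then x C else 0)"
      using True by (simp add: cl_mult_apply cl_one_def cong: if_cong)
    then show ?thesis by simp
  next
    case False then show ?thesis using x by (auto simp: cl_mult_apply clifford_alg_def)
  qed
qed

lemma cl_mult_one_right: "x \<in> clifford_alg n \<Longrightarrow> cl_mult n x cl_one = x"
proof (rule ext)
  fix C assume x: "x \<in> clifford_alg n"
  show "cl_mult n x cl_one C = x C"
  proof (cases "C \<subseteq> {1..n}")
    case True
    have "cl_mult n x cl_one C = (\<Sum>A\<in>Pow {1..n}. if A = C then x C else 0)"
      using True by (auto simp: cl_mult_apply cl_one_def symdiff_empty_iff intro!: sum.cong)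
    then show ?thesis using True by simp
  next
    case False then show ?thesis using x by (auto simp: cl_mult_apply clifford_alg_def)
  qed
qed

lemma cl_mult_gen_left:
  "cl_mult n (cl_gen i) y C = (if C \<subseteq> {1..n} \<and> i \<in> {1..n}
     then swap_sign {i} (symdiff {i} C) * y (symdiff {i} C) else 0)"
proof (cases "C \<subseteq> {1..n}")
  case True
  then have "cl_mult n (cl_gen i) y C = (\<Sum>A\<in>Pow {1..n}.
      if A = {i} then swap_sign {i} (symdiff {i} C) * y (symdiff {i} C) else 0)"
    by (simp add: cl_mult_apply cl_gen_def cong: if_cong)
  then show ?thesis using True by simp
qed (simp add: cl_mult_apply)

lemma cl_gen_mult_gen:
  assumes "a \<in> {1..n}" "b \<in> {1..n}"
  shows "cl_mult n (cl_gen a) (cl_gen b) =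
    (\<lambda>C. if C = symdiff {a} {b} then (if b \<le> a then -1 else 1) else 0)"
proof
  fix C
  show "cl_mult n (cl_gen a) (cl_gen b) C =
      (if C = symdiff {a} {b} then (if b \<le> a then -1 else 1) else 0)"
  proof (cases "C = symdiff {a} {b}")
    case True
    then have "C \<subseteq> {1..n}" using assms by (auto simp: symdiff_def)
    then show ?thesis using True assms
      by (subst cl_mult_gen_left) (simp add: cl_gen_def swap_sign_def)
  next
    case False
    then have "symdiff {a} C \<noteq> {b}" by (auto simp: symdiff_eq_iff)
    then show ?thesis using False assms by (subst cl_mult_gen_left) (simp add: cl_gen_def)
  qed
qed

definition cl_anticomm :: "nat \<Rightarrow> cliff \<Rightarrow> cliff \<Rightarrow> cliff" where
  "cl_anticomm n a b = cl_add (cl_mult n a b) (cl_mult n b a)"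

lemma cl_anticomm_gen:
  assumes "i \<in> {1..n}" "j \<in> {1..n}"
  shows "cl_anticomm n (cl_gen i) (cl_gen j) = (if i = j then cl_scale (-2) cl_one else cl_zero)"
proof -
  have "symdiff {j} {i} = symdiff {i} {j}" "symdiff {i} {i} = {}"
    by (auto simp: symdiff_def)
  then show ?thesis
    unfolding cl_anticomm_def cl_gen_mult_gen[OF assms] cl_gen_mult_gen[OF assms(2,1)]
    by (auto simp: fun_eq_iff cl_apply cl_one_def)
qed

lemma cl_anticomm_add_left: "cl_anticomm n (cl_add a b) c = cl_add (cl_anticomm n a c) (cl_anticomm n b c)"
  by (simp add: cl_anticomm_def cl_mult_add_left cl_mult_add_right fun_eq_iff cl_apply)

lemma cl_anticomm_add_right: "cl_anticomm n c (cl_add a b) = cl_add (cl_anticomm n c a) (cl_anticomm n c b)"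
  by (simp add: cl_anticomm_def cl_mult_add_left cl_mult_add_right fun_eq_iff cl_apply)

lemma cl_anticomm_scale_left: "cl_anticomm n (cl_scale r a) c = cl_scale r (cl_anticomm n a c)"
  by (simp add: cl_anticomm_def cl_mult_scale_left cl_mult_scale_right fun_eq_iff cl_apply
      algebra_simps)

lemma cl_anticomm_scale_right: "cl_anticomm n c (cl_scale r a) = cl_scale r (cl_anticomm n c a)"
  by (simp add: cl_anticomm_def cl_mult_scale_left cl_mult_scale_right fun_eq_iff cl_apply
      algebra_simps)

lemmas cl_anticomm_linear =
  cl_anticomm_add_left cl_anticomm_add_right cl_anticomm_scale_left cl_anticomm_scale_right

lemma witt_anticomm:
  assumes "k \<in> {1..m}" "l \<in> {1..m}" "2 * m \<le> n"
  shows "cl_anticomm n (witt k) (witt l) = cl_zero"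
    and "cl_anticomm n (witt_dag k) (witt_dag l) = cl_zero"
    and "cl_anticomm n (witt_dag k) (witt l) = cl_scale (if k = l then 1 else 0) cl_one"
    and "cl_anticomm n (witt k) (witt_dag l) = cl_scale (if k = l then 1 else 0) cl_one"
proof -
  have gens: "2*k-1 \<in> {1..n}" "2*k \<in> {1..n}" "2*l-1 \<in> {1..n}" "2*l \<in> {1..n}"
    using assms by auto
  have index_eqs: "(2*k-1 = 2*l-1) = (k = l)" "(2*k = 2*l) = (k = l)"
    "(2*k-1 = 2*l) = False" "(2*k = 2*l-1) = False"
    using assms by presburger+
  note G = cl_anticomm_gen[OF gens(1,3)] cl_anticomm_gen[OF gens(1,4)]
    cl_anticomm_gen[OF gens(2,3)] cl_anticomm_gen[OF gens(2,4)]
    cl_anticomm_gen[OF gens(3,1)] cl_anticomm_gen[OF gens(4,1)]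
    cl_anticomm_gen[OF gens(3,2)] cl_anticomm_gen[OF gens(4,2)]
  show "cl_anticomm n (witt k) (witt l) = cl_zero"
    "cl_anticomm n (witt_dag k) (witt_dag l) = cl_zero"
    "cl_anticomm n (witt_dag k) (witt l) = cl_scale (if k = l then 1 else 0) cl_one"
    "cl_anticomm n (witt k) (witt_dag l) = cl_scale (if k = l then 1 else 0) cl_one"
    unfolding witt_def witt_dag_def cl_anticomm_linear G index_eqs
    by (auto simp: fun_eq_iff cl_apply)
qed

section \<open>Commutators with \<^const>\<open>P_op\<close> and \<^const>\<open>Q_op\<close>\<close>

lemma cl_mult_anticomm_swap:
  assumes "cl_anticomm n u a = cl_scale \<alpha> cl_one"
  shows "cl_mult n u a = cl_add (cl_scale \<alpha> cl_one) (cl_scale (-1) (cl_mult n a u))"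
proof -
  have "cl_mult n u a C + cl_mult n a u C = \<alpha> * cl_one C" for C
    using fun_cong[OF assms, of C] by (simp add: cl_anticomm_def cl_apply)
  then show ?thesis by (simp add: fun_eq_iff cl_apply eq_diff_eq[symmetric])
qed

lemma cl_mult_commute_pair:
  assumes "cl_anticomm n u a = cl_scale \<alpha> cl_one" "cl_anticomm n u b = cl_scale \<beta> cl_one"
    and "a \<in> clifford_alg n" "b \<in> clifford_alg n"
  shows "cl_mult n u (cl_mult n a b) =
    cl_add (cl_mult n (cl_mult n a b) u) (cl_add (cl_scale \<alpha> b) (cl_scale (-\<beta>) a))"
proof -
  have "cl_mult n u (cl_mult n a b) = cl_mult n (cl_mult n u a) b"
    by (simp add: cl_mult_assoc)
  also have "\<dots> = cl_add (cl_scale \<alpha> b) (cl_scale (-1) (cl_mult n a (cl_mult n u b)))"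
    unfolding cl_mult_anticomm_swap[OF assms(1)]
    by (simp add: cl_mult_add_left cl_mult_scale_left cl_mult_one_left assms(4) cl_mult_assoc)
  also have "cl_mult n a (cl_mult n u b) = cl_add (cl_scale \<beta> a) (cl_scale (-1) (cl_mult n (cl_mult n a b) u))"
    unfolding cl_mult_anticomm_swap[OF assms(2)]
    by (simp add: cl_mult_add_right cl_mult_scale_right cl_mult_one_right assms(3) cl_mult_assoc)
  finally show ?thesis
    by (simp add: fun_eq_iff cl_apply algebra_simps)
qed

lemma cl_mult_commute_pair_sum:
  assumes "finite J"
    and "\<And>j. j \<in> J \<Longrightarrow> cl_anticomm n u (a j) = cl_scale (\<alpha> j) cl_one"
    and "\<And>j. j \<in> J \<Longrightarrow> cl_anticomm n u (b j) = cl_scale (\<beta> j) cl_one"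
    and "\<And>j. j \<in> J \<Longrightarrow> a j \<in> clifford_alg n" "\<And>j. j \<in> J \<Longrightarrow> b j \<in> clifford_alg n"
  shows "cl_mult n u (cl_sum (\<lambda>j. cl_mult n (a j) (b j)) J) =
    cl_add (cl_mult n (cl_sum (\<lambda>j. cl_mult n (a j) (b j)) J) u)
      (cl_sum (\<lambda>j. cl_add (cl_scale (\<alpha> j) (b j)) (cl_scale (- \<beta> j) (a j))) J)"
  using cl_mult_commute_pair[OF assms(2-5)] assms(1)
  by (simp add: cl_mult_sum_left cl_mult_sum_right fun_eq_iff cl_apply sum.distrib[symmetric]
      cong: sum.cong)

text \<open>Otherwise \<open>simp\<close> rewrites the index \<open>2*j - 1\<close> of \<^const>\<open>P_op\<close>, \<^const>\<open>Q_op\<close> and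
  the Dirac operators to \<open>2*j - Suc 0\<close>, and the index lemmas below would no longer apply.\<close>
declare One_nat_def [simp del]

lemma pair_index_cases:
  fixes k p :: nat
  assumes "k \<in> {1..2*p}"
  obtains (odd_index) i where "i \<in> {1..p}" "k = 2*i - 1"
    | (even_index) i where "i \<in> {1..p}" "k = 2*i"
proof (cases "even k")
  case True then show ?thesis using assms by (intro even_index[of "k div 2"]) auto
next
  case False then show ?thesis using assms by (intro odd_index[of "(k + 1) div 2"]) (auto, presburger+)
qed

lemma odd_index_in_range: "j \<in> {1..p} \<Longrightarrow> 2*j - 1 \<in> {1..2*p}"
  for j p :: nat by auto

lemma pair_index_eqs [simp]:
  fixes i j :: nat
  shows "2*i - 1 = 2*j - 1 \<longleftrightarrow> i = j"
    and "2*i - 1 = 2*j \<longleftrightarrow> i = 0 \<and> j = 0"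
    and "2*j = 2*i - 1 \<longleftrightarrow> i = 0 \<and> j = 0"
  by presburger+

text \<open>The complex structure \<open>\<JJ>\<close> acting on families indexed by the coordinates
  \<open>z\<^sub>1, \<dots>, z\<^sub>2\<^sub>p\<close>; it rotates each pair \<open>(z\<^sub>2\<^sub>j\<^sub>-\<^sub>1, z\<^sub>2\<^sub>j)\<close>.\<close>
definition J_rot :: "(nat \<Rightarrow> cliff) \<Rightarrow> nat \<Rightarrow> cliff" where
  "J_rot e k = (if odd k then cl_scale (-1) (e (k + 1)) else e (k - 1))"

lemma J_rot_odd [simp]: "1 \<le> j \<Longrightarrow> J_rot e (2*j - 1) = cl_scale (-1) (e (2*j))"
  by (simp add: J_rot_def)

lemma J_rot_even [simp]: "J_rot e (2*j) = e (2*j - 1)"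
  by (simp add: J_rot_def)

lemma witt_in_clifford_alg: "k \<in> {1..m} \<Longrightarrow> 2 * m \<le> n \<Longrightarrow> witt k \<in> clifford_alg n"
  by (auto simp: clifford_alg_def witt_def cl_scale_def cl_add_def cl_gen_def)

lemma witt_dag_in_clifford_alg: "k \<in> {1..m} \<Longrightarrow> 2 * m \<le> n \<Longrightarrow> witt_dag k \<in> clifford_alg n"
  by (auto simp: clifford_alg_def witt_dag_def cl_scale_def cl_add_def cl_gen_def)

lemma witt_anticomm_spinor:
  assumes "k \<in> {1..2*p}" "l \<in> {1..2*p}"
  shows "cl_anticomm (4*p) (witt k) (witt l) = cl_zero"
    and "cl_anticomm (4*p) (witt_dag k) (witt_dag l) = cl_zero"
    and "cl_anticomm (4*p) (witt_dag k) (witt l) = cl_scale (if k = l then 1 else 0) cl_one"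
    and "cl_anticomm (4*p) (witt k) (witt_dag l) = cl_scale (if k = l then 1 else 0) cl_one"
  using witt_anticomm[OF assms] by simp_all

lemma witt_in_clifford_alg_spinor:
  "k \<in> {1..2*p} \<Longrightarrow> witt k \<in> clifford_alg (4*p)"
  "k \<in> {1..2*p} \<Longrightarrow> witt_dag k \<in> clifford_alg (4*p)"
  by (simp_all add: witt_in_clifford_alg[where m = "2*p"] witt_dag_in_clifford_alg[where m = "2*p"])

lemmas witt_spinor_pair_index =
  witt_anticomm_spinor witt_anticomm_spinor[OF _ odd_index_in_range]
  witt_in_clifford_alg_spinor witt_in_clifford_alg_spinor[OF odd_index_in_range]

lemma witt_mult_P_op:
  assumes "k \<in> {1..2*p}"
  shows "cl_mult (4*p) (witt k) (P_op p) = cl_mult (4*p) (P_op p) (witt k)"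
  using assms unfolding P_op_def
  by (subst cl_mult_commute_pair_sum[where \<alpha> = "\<lambda>_. 0" and \<beta> = "\<lambda>_. 0"])
     (simp_all add: witt_spinor_pair_index)

lemma witt_dag_mult_Q_op:
  assumes "k \<in> {1..2*p}"
  shows "cl_mult (4*p) (witt_dag k) (Q_op p) = cl_mult (4*p) (Q_op p) (witt_dag k)"
  using assms unfolding Q_op_def
  by (subst cl_mult_commute_pair_sum[where \<alpha> = "\<lambda>_. 0" and \<beta> = "\<lambda>_. 0"])
     (simp_all add: witt_spinor_pair_index)

lemma witt_dag_mult_P_op:
  assumes "k \<in> {1..2*p}"
  shows "cl_mult (4*p) (witt_dag k) (P_op p) = cl_add (cl_mult (4*p) (P_op p) (witt_dag k)) (J_rot witt k)"
proof -
  have "cl_mult (4*p) (witt_dag k) (P_op p) = cl_add (cl_mult (4*p) (P_op p) (witt_dag k))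
      (cl_sum (\<lambda>j. cl_add (cl_scale (if k = 2*j then 1 else 0) (witt (2*j - 1)))
        (cl_scale (- (if k = 2*j - 1 then 1 else 0)) (witt (2*j)))) {1..p})"
    using assms unfolding P_op_def
    by (intro cl_mult_commute_pair_sum) (simp_all add: witt_spinor_pair_index)
  also have "cl_sum (\<lambda>j. cl_add (cl_scale (if k = 2*j then 1 else 0) (witt (2*j - 1)))
        (cl_scale (- (if k = 2*j - 1 then 1 else 0)) (witt (2*j)))) {1..p} = J_rot witt k"
    using assms by (cases rule: pair_index_cases) (auto simp: fun_eq_iff cl_apply if_distrib[of uminus] cong: if_cong)
  finally show ?thesis .
qed

lemma witt_mult_Q_op:
  assumes "k \<in> {1..2*p}"
  shows "cl_mult (4*p) (witt k) (Q_op p) =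
    cl_add (cl_mult (4*p) (Q_op p) (witt k)) (cl_scale (-1) (J_rot witt_dag k))"
proof -
  have "cl_mult (4*p) (witt k) (Q_op p) = cl_add (cl_mult (4*p) (Q_op p) (witt k))
      (cl_sum (\<lambda>j. cl_add (cl_scale (if k = 2*j - 1 then 1 else 0) (witt_dag (2*j)))
        (cl_scale (- (if k = 2*j then 1 else 0)) (witt_dag (2*j - 1)))) {1..p})"
    using assms unfolding Q_op_def
    by (intro cl_mult_commute_pair_sum) (simp_all add: witt_spinor_pair_index)
  also have "cl_sum (\<lambda>j. cl_add (cl_scale (if k = 2*j - 1 then 1 else 0) (witt_dag (2*j)))
        (cl_scale (- (if k = 2*j then 1 else 0)) (witt_dag (2*j - 1)))) {1..p} =
      cl_scale (-1) (J_rot witt_dag k)"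
    using assms by (cases rule: pair_index_cases)
      (auto simp: fun_eq_iff cl_apply if_distrib[of uminus] cong: if_cong)
  finally show ?thesis .
qed

section \<open>The four Dirac operators\<close>

definition cl_dirac :: "nat \<Rightarrow> (nat \<Rightarrow> cliff) \<Rightarrow> (nat \<Rightarrow> cliff) \<Rightarrow> cliff" where
  "cl_dirac p e G = cl_sum (\<lambda>k. cl_mult (4*p) (e k) (G k)) {1..2*p}"

definition cl_dirac_J :: "nat \<Rightarrow> (nat \<Rightarrow> cliff) \<Rightarrow> (nat \<Rightarrow> cliff) \<Rightarrow> cliff" where
  "cl_dirac_J p e G = cl_sum (\<lambda>j. cl_add (cl_mult (4*p) (e (2*j-1)) (G (2*j)))
       (cl_scale (-1) (cl_mult (4*p) (e (2*j)) (G (2*j-1))))) {1..p}"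

lemma dirac_z_eq_cl_dirac: "dirac_z p idx F z = cl_dirac p witt_dag (\<lambda>k. pdz idx k F z)"
  by (simp add: dirac_z_def cl_dirac_def)

lemma dirac_z_dag_eq_cl_dirac: "dirac_z_dag p idx F z = cl_dirac p witt (\<lambda>k. pdzb idx k F z)"
  by (simp add: dirac_z_dag_def cl_dirac_def)

lemma dirac_zJ_eq_cl_dirac_J: "dirac_zJ p idx F z = cl_dirac_J p witt (\<lambda>k. pdz idx k F z)"
  by (simp add: dirac_zJ_def cl_dirac_J_def)

lemma dirac_zJ_dag_eq_cl_dirac_J: "dirac_zJ_dag p idx F z = cl_dirac_J p witt_dag (\<lambda>k. pdzb idx k F z)"
  by (simp add: dirac_zJ_dag_def cl_dirac_J_def)

lemma sum_pairs:
  fixes g :: "nat \<Rightarrow> 'a::comm_monoid_add" and p :: nat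
  shows "(\<Sum>k\<in>{1..2*p}. g k) = (\<Sum>j\<in>{1..p}. g (2*j - 1) + g (2*j))"
proof (induction p)
  case (Suc p)
  have "{1..2 * Suc p} = insert (2*p + 2) (insert (2*p + 1) {1..2*p})" by auto
  then show ?case using Suc by (simp add: add_ac One_nat_def)
qed simp

lemma cl_dirac_J_rot: "cl_dirac p (J_rot e) G = cl_dirac_J p e G"
  unfolding cl_dirac_def cl_dirac_J_def fun_eq_iff cl_apply sum_pairs
  by (auto simp: cl_mult_scale_left cl_apply intro!: sum.cong)

lemma cl_dirac_J_J_rot: "cl_dirac_J p (J_rot e) G = cl_scale (-1) (cl_dirac p e G)"
  by (simp add: cl_dirac_def cl_dirac_J_def fun_eq_iff cl_apply sum_pairs cl_mult_scale_left
      sum_subtractf sum_negf sum.distrib)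

lemma cl_dirac_scale: "cl_dirac p (\<lambda>k. cl_scale c (e k)) G = cl_scale c (cl_dirac p e G)"
  by (simp add: cl_dirac_def fun_eq_iff cl_apply cl_mult_scale_left sum_distrib_left)

lemma cl_dirac_J_scale: "cl_dirac_J p (\<lambda>k. cl_scale c (e k)) G = cl_scale c (cl_dirac_J p e G)"
  by (simp add: cl_dirac_J_def fun_eq_iff cl_apply cl_mult_scale_left sum_distrib_left algebra_simps)

lemma cl_sum_mult_commute:
  assumes "finite K" "\<And>k. k \<in> K \<Longrightarrow> cl_mult n (e k) c = cl_add (cl_mult n c (e k)) (r k)"
  shows "cl_sum (\<lambda>k. cl_mult n (e k) (cl_mult n c (G k))) K =
    cl_add (cl_mult n c (cl_sum (\<lambda>k. cl_mult n (e k) (G k)) K)) (cl_sum (\<lambda>k. cl_mult n (r k) (G k)) K)"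
proof -
  have "cl_mult n (e k) (cl_mult n c (G k)) =
      cl_add (cl_mult n c (cl_mult n (e k) (G k))) (cl_mult n (r k) (G k))" if "k \<in> K" for k
    by (simp add: cl_mult_assoc[symmetric] assms(2)[OF that] cl_mult_add_left)
  then show ?thesis
    using assms(1) by (simp add: cl_mult_sum_right fun_eq_iff cl_apply sum.distrib)
qed

lemma cl_dirac_mult_left:
  assumes "\<And>k. k \<in> {1..2*p} \<Longrightarrow> cl_mult (4*p) (e k) c = cl_add (cl_mult (4*p) c (e k)) (r k)"
  shows "cl_dirac p e (\<lambda>k. cl_mult (4*p) c (G k)) = cl_add (cl_mult (4*p) c (cl_dirac p e G)) (cl_dirac p r G)"
  unfolding cl_dirac_def by (rule cl_sum_mult_commute) (simp_all add: assms)

lemma J_rot_mult_commute: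
  assumes "\<And>k. k \<in> {1..2*p} \<Longrightarrow> cl_mult n (e k) c = cl_add (cl_mult n c (e k)) (r k)"
    and "k \<in> {1..2*p}"
  shows "cl_mult n (J_rot e k) c = cl_add (cl_mult n c (J_rot e k)) (J_rot r k)"
proof (cases "odd k")
  case True
  then have "k + 1 \<in> {1..2*p}" using assms(2) by simp presburger
  then show ?thesis
    using True assms(1)[of "k + 1"]
    by (simp add: J_rot_def cl_mult_scale_left cl_mult_scale_right fun_eq_iff cl_apply)
next
  case False
  then have "k - 1 \<in> {1..2*p}" using assms(2) by simp presburger
  then show ?thesis using False assms(1)[of "k - 1"] by (simp add: J_rot_def)
qed

lemma cl_dirac_J_mult_left:
  assumes "\<And>k. k \<in> {1..2*p} \<Longrightarrow> cl_mult (4*p) (e k) c = cl_add (cl_mult (4*p) c (e k)) (r k)"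
  shows "cl_dirac_J p e (\<lambda>k. cl_mult (4*p) c (G k)) =
    cl_add (cl_mult (4*p) c (cl_dirac_J p e G)) (cl_dirac_J p r G)"
  unfolding cl_dirac_J_rot[symmetric]
  by (rule cl_dirac_mult_left) (rule J_rot_mult_commute[OF assms])

section \<open>Left multiplication by a constant\<close>

lemma vector_derivative_cl_mult:
  fixes F :: "complex^'n::finite \<Rightarrow> cliff"
  assumes "\<And>A. (\<lambda>w. F w A) differentiable (at z)"
  shows "(\<lambda>A. vector_derivative (\<lambda>t::real. cl_mult n c (F (z + t *\<^sub>R v)) A) (at 0)) =
     cl_mult n c (\<lambda>A. vector_derivative (\<lambda>t::real. F (z + t *\<^sub>R v) A) (at 0))"
proof
  fix C
  have "(\<lambda>t::real. z + t *\<^sub>R v) differentiable (at 0)"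
    by (intro derivative_intros)
  then have "(\<lambda>t::real. F (z + t *\<^sub>R v) A) differentiable (at 0)" for A
    using differentiable_chain_at[of "\<lambda>t::real. z + t *\<^sub>R v" 0 "\<lambda>w. F w A"] assms
    by (simp add: o_def)
  then have "((\<lambda>t::real. \<Sum>A\<in>Pow {1..n}. swap_sign A (symdiff A C) * c A * F (z + t *\<^sub>R v) (symdiff A C))
      has_vector_derivative (\<Sum>A\<in>Pow {1..n}. swap_sign A (symdiff A C) * c A *
        vector_derivative (\<lambda>t::real. F (z + t *\<^sub>R v) (symdiff A C)) (at 0))) (at 0)"
    by (intro has_vector_derivative_sum has_vector_derivative_mult_right vector_derivative_works[THEN iffD1])
  then show "vector_derivative (\<lambda>t::real. cl_mult n c (F (z + t *\<^sub>R v)) C) (at 0) =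
      cl_mult n c (\<lambda>A. vector_derivative (\<lambda>t::real. F (z + t *\<^sub>R v) A) (at 0)) C"
    by (simp add: cl_mult_apply vector_derivative_at)
qed

lemma pdz_cl_mult:
  "(\<And>A. (\<lambda>w. F w A) differentiable (at z)) \<Longrightarrow>
    pdz idx k (\<lambda>w. cl_mult n c (F w)) z = cl_mult n c (pdz idx k F z)"
  by (simp add: pdz_def pdx_def pdy_def vector_derivative_cl_mult cl_mult_add_right
      cl_mult_scale_right)

lemma pdzb_cl_mult:
  "(\<And>A. (\<lambda>w. F w A) differentiable (at z)) \<Longrightarrow>
    pdzb idx k (\<lambda>w. cl_mult n c (F w)) z = cl_mult n c (pdzb idx k F z)"
  by (simp add: pdzb_def pdx_def pdy_def vector_derivative_cl_mult cl_mult_add_right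
      cl_mult_scale_right)

lemma cl_differentiable_on_cl_mult:
  assumes "cl_differentiable_on \<Omega> F"
  shows "cl_differentiable_on \<Omega> (\<lambda>z. cl_mult n c (F z))"
  unfolding cl_differentiable_on_def
proof (intro ballI allI)
  fix z A assume "z \<in> \<Omega>"
  then show "(\<lambda>w. cl_mult n c (F w) A) differentiable (at z)"
    using assms by (cases "A \<subseteq> {1..n}")
      (auto simp: cl_mult_apply cl_differentiable_on_def intro!: derivative_intros)
qed

lemma spinor_space_cl_mult: "x \<in> spinor_space p \<Longrightarrow> cl_mult (4*p) c x \<in> spinor_space p"
  unfolding spinor_space_def by (auto simp flip: cl_mult_assoc)

text \<open>Left multiplication by \<open>c\<close> preserves q-monogenicity as soon as its commutators with
  the Witt basis are multiples of the \<open>\<JJ>\<close>-rotated dual basis: the commutator terms then turn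
  each of the four operators into a multiple of another one.\<close>
lemma q_monogenic_cl_mult_left:
  assumes F: "q_monogenic p idx \<Omega> F"
    and comm: "\<And>k. k \<in> {1..2*p} \<Longrightarrow>
      cl_mult (4*p) (witt k) c = cl_add (cl_mult (4*p) c (witt k)) (cl_scale a (J_rot witt_dag k))"
    and comm_dag: "\<And>k. k \<in> {1..2*p} \<Longrightarrow>
      cl_mult (4*p) (witt_dag k) c = cl_add (cl_mult (4*p) c (witt_dag k)) (cl_scale b (J_rot witt k))"
  shows "q_monogenic p idx \<Omega> (\<lambda>z. cl_mult (4*p) c (F z))"
  unfolding q_monogenic_def
proof (intro conjI ballI)
  fix z assume "z \<in> \<Omega>"
  with F have diff: "\<And>A. (\<lambda>w. F w A) differentiable (at z)"
    and zero: "cl_dirac p witt_dag (\<lambda>k. pdz idx k F z) = cl_zero"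
      "cl_dirac_J p witt (\<lambda>k. pdz idx k F z) = cl_zero"
      "cl_dirac p witt (\<lambda>k. pdzb idx k F z) = cl_zero"
      "cl_dirac_J p witt_dag (\<lambda>k. pdzb idx k F z) = cl_zero"
    by (auto simp: q_monogenic_def cl_differentiable_on_def dirac_z_eq_cl_dirac
        dirac_z_dag_eq_cl_dirac dirac_zJ_eq_cl_dirac_J dirac_zJ_dag_eq_cl_dirac_J)
  have commute:
    "cl_dirac p witt_dag (\<lambda>k. cl_mult (4*p) c (G k)) = cl_add (cl_mult (4*p) c (cl_dirac p witt_dag G))
       (cl_dirac p (\<lambda>k. cl_scale b (J_rot witt k)) G)"
    "cl_dirac_J p witt_dag (\<lambda>k. cl_mult (4*p) c (G k)) = cl_add (cl_mult (4*p) c (cl_dirac_J p witt_dag G))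
       (cl_dirac_J p (\<lambda>k. cl_scale b (J_rot witt k)) G)"
    "cl_dirac p witt (\<lambda>k. cl_mult (4*p) c (G k)) = cl_add (cl_mult (4*p) c (cl_dirac p witt G))
       (cl_dirac p (\<lambda>k. cl_scale a (J_rot witt_dag k)) G)"
    "cl_dirac_J p witt (\<lambda>k. cl_mult (4*p) c (G k)) = cl_add (cl_mult (4*p) c (cl_dirac_J p witt G))
       (cl_dirac_J p (\<lambda>k. cl_scale a (J_rot witt_dag k)) G)" for G
    by (rule cl_dirac_mult_left cl_dirac_J_mult_left, rule comm comm_dag, assumption)+
  show "dirac_z p idx (\<lambda>z. cl_mult (4*p) c (F z)) z = cl_zero"
    "dirac_z_dag p idx (\<lambda>z. cl_mult (4*p) c (F z)) z = cl_zero"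
    "dirac_zJ p idx (\<lambda>z. cl_mult (4*p) c (F z)) z = cl_zero"
    "dirac_zJ_dag p idx (\<lambda>z. cl_mult (4*p) c (F z)) z = cl_zero"
    unfolding dirac_z_eq_cl_dirac dirac_z_dag_eq_cl_dirac dirac_zJ_eq_cl_dirac_J
      dirac_zJ_dag_eq_cl_dirac_J pdz_cl_mult[OF diff] pdzb_cl_mult[OF diff] commute
    by (simp_all add: zero cl_dirac_scale cl_dirac_J_scale cl_dirac_J_rot cl_dirac_J_J_rot)
qed (use F in \<open>auto simp: q_monogenic_def spinor_space_cl_mult cl_differentiable_on_cl_mult\<close>)

theorem lemma2:
  fixes p :: nat and idx :: "nat \<Rightarrow> 'n::finite"
    and \<Omega> :: "(complex^'n) set" and F :: "complex^'n \<Rightarrow> cliff"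
  assumes "bij_betw idx {1..2*p} (UNIV :: 'n set)"
    and "open \<Omega>"
    and "cl_differentiable_on \<Omega> F"
    and "q_monogenic p idx \<Omega> F"
  shows "q_monogenic p idx \<Omega> (\<lambda>z. cl_mult (4*p) (P_op p) (F z)) \<and>
         q_monogenic p idx \<Omega> (\<lambda>z. cl_mult (4*p) (Q_op p) (F z))"
  \<comment> \<open>only the last hypothesis is needed; it already contains differentiability\<close>
proof
  show "q_monogenic p idx \<Omega> (\<lambda>z. cl_mult (4*p) (P_op p) (F z))"
    by (rule q_monogenic_cl_mult_left[where a = 0 and b = 1, OF assms(4)])
       (simp_all add: witt_mult_P_op witt_dag_mult_P_op)
  show "q_monogenic p idx \<Omega> (\<lambda>z. cl_mult (4*p) (Q_op p) (F z))"
    by (rule q_monogenic_cl_mult_left[where a = "-1" and b = 0, OF assms(4)])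
       (simp_all add: witt_mult_Q_op witt_dag_mult_Q_op)
qed

end
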